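(* Let $D$ be an in-round oriented graph. Then $D$ has dichromatic number at most $2$. More precisely, for every vertex $x$ there exists a colouring of $V(D)$ with two colours in which each colour class induces an acyclic subdigraph and $\{x\}\cup x^+$ is monochromatic.
   Context: Digraphs are finite, no loops, no parallel arcs; an oriented graph has no digon. $x^+$ is the out-neighbourhood of $x$. A cyclic order of $V$ is an equivalence class of linear orders under cyclic shifts; for vertices $u,v$, $[u,v]$ is the set of vertices met going forward from $u$ to $v$ in the cyclic order (inclusive) and $]u,v[=[u,v]\setminus\{u,v\}$. An oriented graph is in-round if there is a cyclic order of its vertices such that for every arc $xy$ and every $z\in\,]x,y[$, $zy$ is an arc. The dichromatic number is the least number of colours in a vertex colouring where each colour class induces a subdigraph with no directed cycle. *)

theory Defs
  imports Main
begin

definition digraph :: "'a set \<Rightarrow> ('a \<times> 'a) set \<Rightarrow> bool" where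
  "digraph V A \<longleftrightarrow> finite V \<and> A \<subseteq> V \<times> V \<and> (\<forall>x. (x, x) \<notin> A)"

definition oriented_graph :: "'a set \<Rightarrow> ('a \<times> 'a) set \<Rightarrow> bool" where
  "oriented_graph V A \<longleftrightarrow> digraph V A \<and> (\<forall>x y. (x, y) \<in> A \<longrightarrow> (y, x) \<notin> A)"

definition out_nbhd :: "('a \<times> 'a) set \<Rightarrow> 'a \<Rightarrow> 'a set" where
  "out_nbhd A x = {y. (x, y) \<in> A}"

text \<open>A cyclic order on V is represented by a linear order, given as a bijection
  p from V onto positions 0..card V - 1 (any cyclic shift gives the same cyclic order).
  cyc_open p x y z means z lies in the open cyclic interval ]x,y[ i.e. z is met strictly
  after x and strictly before y going forward from x.\<close>

definition cyc_open :: "('a \<Rightarrow> nat) \<Rightarrow> 'a \<Rightarrow> 'a \<Rightarrow> 'a \<Rightarrow> bool" where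
  "cyc_open p x y z \<longleftrightarrow>
     (if p x < p y then p x < p z \<and> p z < p y else p x < p z \<or> p z < p y)"

definition in_round :: "'a set \<Rightarrow> ('a \<times> 'a) set \<Rightarrow> bool" where
  "in_round V A \<longleftrightarrow> oriented_graph V A \<and>
     (\<exists>p. bij_betw p V {0..<card V} \<and>
        (\<forall>x y z. (x, y) \<in> A \<longrightarrow> z \<in> V \<longrightarrow> cyc_open p x y z \<longrightarrow> (z, y) \<in> A))"

definition acyclic_set :: "('a \<times> 'a) set \<Rightarrow> 'a set \<Rightarrow> bool" where
  "acyclic_set A S \<longleftrightarrow> acyclic (A \<inter> (S \<times> S))"

definition dichromatic_number :: "'a set \<Rightarrow> ('a \<times> 'a) set \<Rightarrow> nat" where
  "dichromatic_number V A = (LEAST k. \<exists>c :: 'a \<Rightarrow> nat.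
      (\<forall>v\<in>V. c v < k) \<and> (\<forall>i<k. acyclic_set A {v\<in>V. c v = i}))"

end

theory Submission
  imports Defs
begin

text \<open>Rotate the cyclic order so that x sits at position 0, let reach be the largest position
  of x or of an out-neighbour of x, and colour the positions up to reach with 0 and the others
  with 1. Inside each colour class every arc goes forward in the linear order, so both classes are
  acyclic. Indeed, by in-roundness a backward arc uw makes every vertex outside the segment from w
  to u an in-neighbour of w. Above reach this makes w an out-neighbour of x, contradicting the
  choice of reach. Below reach, with y the out-neighbour of x at position reach, it gives the arc
  yw, whereas in-roundness applied to the arc xy gives wy.\<close>

definition acyclic_colouring :: "'a set \<Rightarrow> ('a \<times> 'a) set \<Rightarrow> nat \<Rightarrow> ('a \<Rightarrow> nat) \<Rightarrow> bool" where
  "acyclic_colouring V A k c \<longleftrightarrow> (\<forall>v\<in>V. c v < k) \<and> (\<forall>i<k. acyclic_set A {v\<in>V. c v = i})"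

lemma dichromatic_number_le:
  "acyclic_colouring V A k c \<Longrightarrow> dichromatic_number V A \<le> k"
  unfolding dichromatic_number_def acyclic_colouring_def by (rule Least_le) blast

lemma acyclic_if_increasing:
  assumes "r \<subseteq> {(a, b). (f :: 'a \<Rightarrow> nat) a < f b}"
  shows "acyclic r"
proof -
  have "r \<subseteq> inv_image less_than f" using assms by auto
  then show ?thesis by (meson wf_acyclic wf_inv_image wf_less_than wf_subset)
qed

lemma add_mod_eq_iff:
  fixes a b n s :: nat
  assumes "a < n" "b < n" "s \<le> n"
  shows "(a + s) mod n = (b + s) mod n \<longleftrightarrow> a = b"
  using assms by (simp add: mod_if le_mod_geq) arith

lemma inj_on_rotate:
  fixes p :: "'a \<Rightarrow> nat"
  assumes "inj_on p V" "p ` V \<subseteq> {..<n}" "s \<le> n"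
  shows "inj_on (\<lambda>v. (p v + s) mod n) V"
proof (rule inj_onI)
  fix u v assume "u \<in> V" "v \<in> V" and eq: "(p u + s) mod n = (p v + s) mod n"
  have "p u < n" "p v < n" using \<open>u \<in> V\<close> \<open>v \<in> V\<close> assms(2) by auto
  with eq assms(3) have "p u = p v" by (simp add: add_mod_eq_iff)
  then show "u = v" using inj_onD[OF assms(1)] \<open>u \<in> V\<close> \<open>v \<in> V\<close> by blast
qed

lemma cyc_open_rotate:
  fixes p :: "'a \<Rightarrow> nat"
  assumes "p u < n" "p w < n" "p z < n" "s \<le> n"
  shows "cyc_open (\<lambda>v. (p v + s) mod n) u w z \<longleftrightarrow> cyc_open p u w z"
  using assms by (simp add: cyc_open_def mod_if le_mod_geq) arith

locale rooted_in_round_order =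
  fixes V :: "'a set" and A :: "('a \<times> 'a) set" and q :: "'a \<Rightarrow> nat" and x :: 'a
  assumes oriented: "oriented_graph V A"
    and inj_q: "inj_on q V"
    and root: "x \<in> V" "q x = 0"
    and in_round_q: "\<And>u w z. (u, w) \<in> A \<Longrightarrow> z \<in> V \<Longrightarrow> cyc_open q u w z \<Longrightarrow> (z, w) \<in> A"
begin

lemma arcs_in_V: "(u, w) \<in> A \<Longrightarrow> u \<in> V \<and> w \<in> V"
  using oriented by (auto simp: oriented_graph_def digraph_def)

lemma no_digon: "(u, w) \<in> A \<Longrightarrow> (w, u) \<notin> A"
  using oriented by (auto simp: oriented_graph_def)

lemma arc_forward_or_backward:
  assumes "(u, w) \<in> A"
  shows "q u < q w \<or> q w < q u"
proof -
  have "u \<noteq> w" using assms oriented by (auto simp: oriented_graph_def digraph_def)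
  then show ?thesis using arcs_in_V[OF assms] inj_q by (metis inj_onD linorder_neqE_nat)
qed

lemma in_arc_outside_backward_arc:
  assumes "(u, w) \<in> A" "q w < q u" "z \<in> V" "q z < q w \<or> q u < q z"
  shows "(z, w) \<in> A"
  using assms by (intro in_round_q[of u w z]) (auto simp: cyc_open_def)

lemma in_arc_inside_forward_arc:
  assumes "(u, w) \<in> A" "q u < q z" "q z < q w" "z \<in> V"
  shows "(z, w) \<in> A"
  using assms by (intro in_round_q[of u w z]) (auto simp: cyc_open_def)

definition reach :: nat where
  "reach = Max (q ` insert x (out_nbhd A x))"

lemma finite_closed_out_nbhd: "finite (insert x (out_nbhd A x))"
proof -
  have "out_nbhd A x \<subseteq> V" using arcs_in_V by (auto simp: out_nbhd_def)
  moreover have "finite V" using oriented by (simp add: oriented_graph_def digraph_def)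
  ultimately show ?thesis by (auto intro: finite_subset)
qed

lemma le_reach: "y \<in> insert x (out_nbhd A x) \<Longrightarrow> q y \<le> reach"
  unfolding reach_def using finite_closed_out_nbhd by (intro Max_ge) auto

lemma reach_attained:
  obtains y where "y \<in> insert x (out_nbhd A x)" "q y = reach"
  using Max_in[of "q ` insert x (out_nbhd A x)"] finite_closed_out_nbhd
  unfolding reach_def by (metis empty_not_insert finite_imageI image_iff image_is_empty)

lemma arc_forward_above_reach:
  assumes "(u, w) \<in> A" "reach < q u" "reach < q w"
  shows "q u < q w"
proof (rule ccontr)
  assume "\<not> q u < q w"
  with assms(1) have "q w < q u" using arc_forward_or_backward by blast
  moreover have "q x < q w" using assms(3) root by simp
  ultimately have "(x, w) \<in> A" using assms(1) root in_arc_outside_backward_arc by blast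
  then have "q w \<le> reach" by (intro le_reach) (simp add: out_nbhd_def)
  with assms(3) show False by simp
qed

lemma arc_forward_below_reach:
  assumes uw: "(u, w) \<in> A" and "q u \<le> reach" "q w \<le> reach"
  shows "q u < q w"
proof (rule ccontr)
  assume "\<not> q u < q w"
  with uw have backward: "q w < q u" using arc_forward_or_backward by blast
  obtain y where y: "y \<in> insert x (out_nbhd A x)" "q y = reach" by (rule reach_attained)
  have "y \<noteq> x" using backward \<open>q u \<le> reach\<close> y(2) root by auto
  with y have xy: "(x, y) \<in> A" by (simp add: out_nbhd_def)
  have "(y, w) \<in> A"
  proof (cases "u = y")
    case False
    then have "q u < q y"
      using inj_q arcs_in_V[OF uw] arcs_in_V[OF xy] y(2) \<open>q u \<le> reach\<close>
      by (metis inj_onD le_neq_implies_less)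
    then show ?thesis using in_arc_outside_backward_arc[OF uw backward] arcs_in_V[OF xy] by blast
  qed (use uw in simp)
  moreover have "(w, y) \<in> A"
  proof (cases "w = x")
    case False
    then have "q x < q w" using inj_q arcs_in_V[OF uw] root by (metis inj_onD neq0_conv)
    then show ?thesis
      using in_arc_inside_forward_arc[OF xy] arcs_in_V[OF uw] backward y(2) \<open>q u \<le> reach\<close>
      by simp
  qed (use xy in simp)
  ultimately show False using no_digon by blast
qed

definition reach_colour :: "'a \<Rightarrow> nat" where
  "reach_colour v = (if q v \<le> reach then 0 else 1)"

lemma acyclic_colouring_reach_colour: "acyclic_colouring V A 2 reach_colour"
proof -
  have "acyclic_set A {v\<in>V. reach_colour v = i}" if "i < 2" for i
  proof -
    have "A \<inter> ({v\<in>V. reach_colour v = i} \<times> {v\<in>V. reach_colour v = i}) \<subseteq> {(a, b). q a < q b}"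
      using that arc_forward_above_reach arc_forward_below_reach
      by (auto simp: reach_colour_def less_2_cases_iff split: if_splits)
    then show ?thesis unfolding acyclic_set_def by (rule acyclic_if_increasing)
  qed
  then show ?thesis by (simp add: acyclic_colouring_def reach_colour_def)
qed

lemma reach_colour_closed_out_nbhd:
  "y \<in> insert x (out_nbhd A x) \<Longrightarrow> reach_colour y = reach_colour x"
  using le_reach root by (simp add: reach_colour_def)

end

lemma in_round_rooted_order:
  assumes "in_round V A" "x \<in> V"
  obtains q where "rooted_in_round_order V A q x"
proof -
  obtain p where bij: "bij_betw p V {0..<card V}"
    and p_in_round: "\<And>u w z. (u, w) \<in> A \<Longrightarrow> z \<in> V \<Longrightarrow> cyc_open p u w z \<Longrightarrow> (z, w) \<in> A"
    using assms(1) unfolding in_round_def by blast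
  define n where "n = card V"
  have p_lt: "v \<in> V \<Longrightarrow> p v < n" for v using bij by (auto simp: bij_betw_def n_def)
  have p_range: "p ` V \<subseteq> {..<n}" using p_lt by auto
  define q where "q = (\<lambda>v. (p v + (n - p x)) mod n)"
  have AV: "A \<subseteq> V \<times> V" using assms(1) by (simp add: in_round_def oriented_graph_def digraph_def)
  have "rooted_in_round_order V A q x"
  proof
    show "oriented_graph V A" using assms(1) by (simp add: in_round_def)
    show "inj_on q V" unfolding q_def
      using bij p_range by (intro inj_on_rotate) (auto simp: bij_betw_def)
    show "x \<in> V" "q x = 0" using assms(2) p_lt[OF assms(2)] by (auto simp: q_def)
    show "(z, w) \<in> A" if "(u, w) \<in> A" "z \<in> V" "cyc_open q u w z" for u w z
    proof -
      have "u \<in> V" "w \<in> V" using that(1) AV by auto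
      then have "cyc_open p u w z"
        using that(2,3) cyc_open_rotate[of p u n w z "n - p x"] p_lt unfolding q_def by simp
      then show ?thesis using p_in_round that(1,2) by blast
    qed
  qed
  then show thesis by (rule that)
qed

lemma in_round_rooted_colouring:
  assumes "in_round V A" "x \<in> V"
  shows "\<exists>c. acyclic_colouring V A 2 c \<and> (\<forall>y\<in>insert x (out_nbhd A x). c y = c x)"
proof -
  obtain q where "rooted_in_round_order V A q x" using assms by (rule in_round_rooted_order)
  then interpret rooted_in_round_order V A q x .
  show ?thesis
    using acyclic_colouring_reach_colour reach_colour_closed_out_nbhd by blast
qed

theorem proposition3p4:
  fixes V :: "'a set" and A :: "('a \<times> 'a) set"
  assumes "in_round V A"
  shows "dichromatic_number V A \<le> 2 \<and>
    (\<forall>x\<in>V. \<exists>c :: 'a \<Rightarrow> nat.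
        (\<forall>v\<in>V. c v < 2) \<and>
        (\<forall>i<2. acyclic_set A {v\<in>V. c v = i}) \<and>
        (\<forall>y\<in>insert x (out_nbhd A x). c y = c x))"
proof
  have "\<exists>c. acyclic_colouring V A 2 c"
  proof (cases "V = {}")
    case True
    then show ?thesis by (auto simp: acyclic_colouring_def acyclic_set_def acyclic_def)
  next
    case False
    then show ?thesis using in_round_rooted_colouring[OF assms] by blast
  qed
  then show "dichromatic_number V A \<le> 2" using dichromatic_number_le by blast
  show "\<forall>x\<in>V. \<exists>c :: 'a \<Rightarrow> nat.
        (\<forall>v\<in>V. c v < 2) \<and>
        (\<forall>i<2. acyclic_set A {v\<in>V. c v = i}) \<and>
        (\<forall>y\<in>insert x (out_nbhd A x). c y = c x)"
    using in_round_rooted_colouring[OF assms] by (simp add: acyclic_colouring_def)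
qed

end
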